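(* Let $p\in(0,1]$ and let $X_i$, $Y_i$, $S_\rho$, $S$ be as follows: $X_1,\dots,X_n$ i.i.d. $\mathcal N(0,1)$, $Y_1\ge\dots\ge Y_n$ the non-increasing rearrangement of $|X_1|^p,\dots,|X_n|^p$, $S_\rho=\sum_{i=1}^{\lceil\rho n\rceil}Y_i$, $S=\mathbb E[S_1]$. For every $\rho<\rho^*(p)$ there exist $\delta>0$ and $c_2>0$ such that for all sufficiently large $n$, with probability at least $1-2e^{-c_2n}$, $S_\rho\le(\tfrac12-\delta)S$.
   Context: Let $f(z)=\sqrt{2/\pi}\,e^{-z^2/2}$ for $z\ge0$; $z^*(p)>0$ satisfies $\int_0^{z^*}x^pf(x)\,dx=\int_{z^*}^\infty x^pf(x)\,dx$ and $\rho^*(p)=1-\operatorname{erf}(z^*(p)/\sqrt2)$. *)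

theory Defs
  imports "HOL-Probability.Probability"
begin

definition half_normal :: "real \<Rightarrow> real" where
  "half_normal z = sqrt (2 / pi) * exp (- (z\<^sup>2) / 2)"

definition erf :: "real \<Rightarrow> real" where
  "erf x = 2 / sqrt pi * integral {0..x} (\<lambda>t. exp (- (t\<^sup>2)))"

definition zstar :: "real \<Rightarrow> real" where
  "zstar p = (THE z. z > 0 \<and>
     integral {0..z} (\<lambda>x. x powr p * half_normal x) = integral {z..} (\<lambda>x. x powr p * half_normal x))"

definition rhostar :: "real \<Rightarrow> real" where
  "rhostar p = 1 - erf (zstar p / sqrt 2)"

definition std_gauss :: "real measure" where
  "std_gauss = density lborel std_normal_density"

definition gauss_vec :: "nat \<Rightarrow> (nat \<Rightarrow> real) measure" where
  "gauss_vec n = PiM {..<n} (\<lambda>_. std_gauss)"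

definition Ys :: "real \<Rightarrow> nat \<Rightarrow> (nat \<Rightarrow> real) \<Rightarrow> real list" where
  "Ys p n \<omega> = rev (sort (map (\<lambda>i. \<bar>\<omega> i\<bar> powr p) [0..<n]))"

definition S_rho :: "real \<Rightarrow> nat \<Rightarrow> real \<Rightarrow> (nat \<Rightarrow> real) \<Rightarrow> real" where
  "S_rho p n \<rho> \<omega> = sum_list (take (nat \<lceil>\<rho> * real n\<rceil>) (Ys p n \<omega>))"

definition S_mean :: "real \<Rightarrow> nat \<Rightarrow> real" where
  "S_mean p n = (\<integral>\<omega>. S_rho p n 1 \<omega> \<partial>gauss_vec n)"

end

theory Submission
  imports Defs "HOL-Combinatorics.Permutations"
begin

text \<open>
  Let \<open>X\<^sub>1, \<dots>, X\<^sub>n\<close> be i.i.d. standard Gaussians, \<open>\<mu> = E |X|^p\<close> and \<open>S = n \<mu>\<close>.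
  Given \<open>\<rho> < \<rho>*(p)\<close>, choose a threshold \<open>t > z*(p)\<close> so close to \<open>z*(p)\<close> that
  \<open>q = P(|X| \<ge> t) = 1 - erf(t/\<surd>2)\<close> still exceeds \<open>\<rho>\<close>.  Because \<open>t > z*(p)\<close>, the truncated
  moment \<open>a = E[|X|^p; |X| \<ge> t]\<close> is strictly less than \<open>\<mu>/2\<close>.  Two Chernoff bounds show that,
  outside an event of probability at most \<open>2 e^{-cn}\<close>, more than \<open>(q + \<rho>) n / 2 \<ge> \<lceil>\<rho> n\<rceil>\<close>
  samples satisfy \<open>|X\<^sub>i| \<ge> t\<close>, and the sum of \<open>|X\<^sub>i|^p\<close> over these samples is below
  \<open>n (a + \<mu>/2) / 2 = (1/2 - \<delta>) S\<close>.  On that good event the \<open>\<lceil>\<rho> n\<rceil>\<close> largest values are all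
  among the samples above the threshold, hence \<open>S\<^sub>\<rho> \<le> (1/2 - \<delta>) S\<close>.
\<close>

section \<open>Sums of the largest entries of a list\<close>

lemma filter_eq_takeWhile_sorted_desc:
  fixes xs :: "real list"
  assumes "sorted_wrt (\<ge>) xs"
  shows "filter (\<lambda>x. T \<le> x) xs = takeWhile (\<lambda>x. T \<le> x) xs"
  using assms
proof (induction xs)
  case (Cons x xs)
  show ?case
  proof (cases "T \<le> x")
    case False
    with Cons.prems have "\<forall>y\<in>set xs. \<not> T \<le> y" by fastforce
    with False show ?thesis by simp
  qed (use Cons in simp)
qed simp

lemma sum_take_le_sum_list:
  fixes xs :: "real list"
  assumes "\<forall>x\<in>set xs. 0 \<le> x"
  shows "sum_list (take k xs) \<le> sum_list xs"
proof -
  have "0 \<le> sum_list (drop k xs)"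
    using assms by (intro sum_list_nonneg) (auto dest: in_set_dropD)
  then show ?thesis
    by (metis append_take_drop_id le_add_same_cancel1 sum_list_append)
qed

text \<open>If at least \<open>k\<close> entries of a non-negative list are \<open>\<ge> T\<close>, then the \<open>k\<close> largest entries
  are all \<open>\<ge> T\<close>, so their sum is at most the sum of all entries \<open>\<ge> T\<close>.\<close>

lemma sum_largest_le_sum_above:
  fixes xs :: "real list"
  assumes nonneg: "\<forall>x\<in>set xs. 0 \<le> x"
    and k: "k \<le> length (filter (\<lambda>x. T \<le> x) xs)"
  shows "sum_list (take k (rev (sort xs))) \<le> sum_list (filter (\<lambda>x. T \<le> x) xs)"
proof -
  define L where "L = rev (sort xs)"
  have mset_L: "mset L = mset xs" by (simp add: L_def)
  have above: "filter (\<lambda>x. T \<le> x) L = takeWhile (\<lambda>x. T \<le> x) L"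
    by (rule filter_eq_takeWhile_sorted_desc) (simp add: L_def sorted_wrt_rev)
  have same_above: "mset (filter (\<lambda>x. T \<le> x) L) = mset (filter (\<lambda>x. T \<le> x) xs)"
    using mset_L by (simp add: mset_filter)
  then have "k \<le> length (takeWhile (\<lambda>x. T \<le> x) L)"
    using k above by (metis size_mset)
  then have "take k L = take k (filter (\<lambda>x. T \<le> x) L)"
    by (metis above takeWhile_dropWhile_id take_append diff_is_0_eq take0 append_Nil2)
  also have "sum_list \<dots> \<le> sum_list (filter (\<lambda>x. T \<le> x) L)"
    using nonneg mset_L by (intro sum_take_le_sum_list) (auto dest: mset_eq_setD)
  also have "\<dots> = sum_list (filter (\<lambda>x. T \<le> x) xs)"
    using same_above by (metis sum_mset_sum_list)
  finally show ?thesis by (simp add: L_def)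
qed

lemma sum_list_filter_map_upt:
  fixes f :: "nat \<Rightarrow> real"
  shows "sum_list (filter P (map f [0..<n])) = (\<Sum>i<n. if P (f i) then f i else 0)"
  by (induction n) auto

lemma length_filter_map_upt:
  "length (filter P (map f [0..<n])) = card {i\<in>{..<n}. P (f i)}"
proof (induction n)
  case (Suc n)
  have "{i\<in>{..<Suc n}. P (f i)} = {i\<in>{..<n}. P (f i)} \<union> (if P (f n) then {n} else {})"
    by (auto simp: less_Suc_eq)
  then show ?case using Suc by (auto simp: card_insert_if)
qed simp

section \<open>Measurability of statistics of a sorted sample\<close>

lemma map_permuted_indices:
  assumes "\<pi> permutes {..<n}"
  shows "permute_list \<pi> (map g [0..<n]) = map (\<lambda>j. g (\<pi> j)) [0..<n]"
proof -
  have "\<pi> j < n" if "j < n" for j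
    using permutes_in_image[OF assms] that by auto
  then show ?thesis by (auto simp: permute_list_def intro!: nth_equalityI)
qed

text \<open>A property holds of the sorted sample iff it holds of some sorted rearrangement of the
  sample; this expresses sorting as a finite union over permutations.\<close>

lemma sort_as_permutation:
  fixes g :: "nat \<Rightarrow> real"
  shows "(\<exists>\<pi>. \<pi> permutes {..<n} \<and> sorted (map (\<lambda>j. g (\<pi> j)) [0..<n])
            \<and> P (map (\<lambda>j. g (\<pi> j)) [0..<n]))
         \<longleftrightarrow> P (sort (map g [0..<n]))"
proof
  assume "\<exists>\<pi>. \<pi> permutes {..<n} \<and> sorted (map (\<lambda>j. g (\<pi> j)) [0..<n])
            \<and> P (map (\<lambda>j. g (\<pi> j)) [0..<n])"
  then obtain \<pi> where \<pi>: "\<pi> permutes {..<n}" and sorted: "sorted (map (\<lambda>j. g (\<pi> j)) [0..<n])"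
    and P: "P (map (\<lambda>j. g (\<pi> j)) [0..<n])" by blast
  have "mset (map (\<lambda>j. g (\<pi> j)) [0..<n]) = mset (map g [0..<n])"
    using map_permuted_indices[OF \<pi>, of g] mset_permute_list[of \<pi> "map g [0..<n]"] \<pi> by simp
  then have "map (\<lambda>j. g (\<pi> j)) [0..<n] = sort (map g [0..<n])"
    using properties_for_sort[OF _ sorted] by simp
  with P show "P (sort (map g [0..<n]))" by simp
next
  assume P: "P (sort (map g [0..<n]))"
  obtain \<pi> where \<pi>: "\<pi> permutes {..<length (map g [0..<n])}"
    "permute_list \<pi> (map g [0..<n]) = sort (map g [0..<n])"
    using mset_eq_permutation[of "sort (map g [0..<n])" "map g [0..<n]"] by auto
  then have "\<pi> permutes {..<n}" by simp
  moreover have "map (\<lambda>j. g (\<pi> j)) [0..<n] = sort (map g [0..<n])"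
    using \<pi>(2) map_permuted_indices[OF \<open>\<pi> permutes {..<n}\<close>, of g] by simp
  ultimately show "\<exists>\<pi>. \<pi> permutes {..<n} \<and> sorted (map (\<lambda>j. g (\<pi> j)) [0..<n])
            \<and> P (map (\<lambda>j. g (\<pi> j)) [0..<n])"
    using P by (intro exI[of _ \<pi>]) simp
qed

lemma sorted_map_upt_iff:
  "sorted (map g [0..<n]) \<longleftrightarrow> (\<forall>j\<in>{..<n}. \<forall>j'\<in>{..<n}. j \<le> j' \<longrightarrow> g j \<le> g j')"
  by (auto simp: sorted_iff_nth_mono)

lemma pred_sorted_rearrangement:
  fixes f :: "'a \<Rightarrow> nat \<Rightarrow> real"
  assumes f: "\<And>i. i < n \<Longrightarrow> (\<lambda>\<omega>. f \<omega> i) \<in> borel_measurable M"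
    and P: "\<And>\<pi>. \<pi> permutes {..<n} \<Longrightarrow> Measurable.pred M (\<lambda>\<omega>. P (map (\<lambda>j. f \<omega> (\<pi> j)) [0..<n]))"
  shows "Measurable.pred M (\<lambda>\<omega>. P (sort (map (f \<omega>) [0..<n])))"
proof -
  have sorted_pred: "Measurable.pred M (\<lambda>\<omega>. sorted (map (\<lambda>j. f \<omega> (\<pi> j)) [0..<n]))"
    if \<pi>: "\<pi> permutes {..<n}" for \<pi>
  proof -
    have "\<pi> j < n" if "j < n" for j using permutes_in_image[OF \<pi>] that by auto
    then have le: "Measurable.pred M (\<lambda>\<omega>. f \<omega> (\<pi> j) \<le> f \<omega> (\<pi> j'))" if "j < n" "j' < n" for j j'
      unfolding pred_def using f that by (intro borel_measurable_le) auto
    have "Measurable.pred M (\<lambda>\<omega>. \<forall>j\<in>{..<n}. \<forall>j'\<in>{..<n}. j \<le> j' \<longrightarrow> f \<omega> (\<pi> j) \<le> f \<omega> (\<pi> j'))"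
      by (intro pred_intros_countable_bounded(3) pred_intros_imp' le) auto
    then show ?thesis unfolding sorted_map_upt_iff .
  qed
  have "Measurable.pred M (\<lambda>\<omega>. \<exists>\<pi>\<in>{\<pi>. \<pi> permutes {..<n}}.
      sorted (map (\<lambda>j. f \<omega> (\<pi> j)) [0..<n]) \<and> P (map (\<lambda>j. f \<omega> (\<pi> j)) [0..<n]))"
    using finite_permutations[of "{..<n}"]
    by (intro pred_intros_finite(4) pred_intros_logic(3) sorted_pred P) auto
  moreover have "P (sort (map (f \<omega>) [0..<n])) \<longleftrightarrow> (\<exists>\<pi>\<in>{\<pi>. \<pi> permutes {..<n}}.
      sorted (map (\<lambda>j. f \<omega> (\<pi> j)) [0..<n]) \<and> P (map (\<lambda>j. f \<omega> (\<pi> j)) [0..<n]))" for \<omega>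
    using sort_as_permutation[of n "f \<omega>" P] by simp
  ultimately show ?thesis by simp
qed

section \<open>Chernoff bounds for i.i.d. sums\<close>

lemma exp_le_quadratic: "exp y \<le> 1 + y + y\<^sup>2 * exp \<bar>y::real\<bar>"
proof (cases "y \<ge> 0")
  case True
  have secant: "exp y - 1 \<le> y * exp y"
  proof -
    have "1 - y \<le> exp (-y)" using exp_ge_add_one_self[of "-y"] by simp
    then have "exp y * (1 - y) \<le> exp y * exp (-y)" by (intro mult_left_mono) auto
    then show ?thesis by (simp add: exp_minus field_simps)
  qed
  have "exp y - 1 - y \<le> y * (exp y - 1)" using secant by (simp add: algebra_simps)
  also have "\<dots> \<le> y * (y * exp y)" using secant True by (intro mult_left_mono) auto
  finally show ?thesis using True by (simp add: power2_eq_square algebra_simps)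
next
  case False
  define s where "s = -y"
  have s: "s > 0" using False s_def by simp
  have lower: "1 - exp (-s) \<le> s" using exp_ge_add_one_self[of "-s"] by simp
  have upper: "s * exp (-s) \<le> 1 - exp (-s)"
  proof -
    have "1 + s \<le> exp s" by (rule exp_ge_add_one_self)
    then have "(1 + s) * exp (-s) \<le> exp s * exp (-s)" by (intro mult_right_mono) auto
    then show ?thesis by (simp add: exp_minus field_simps)
  qed
  have "exp (-s) - 1 + s \<le> s * (1 - exp (-s))" using upper by (simp add: algebra_simps)
  also have "\<dots> \<le> s * s" using lower s by (intro mult_left_mono) auto
  also have "\<dots> \<le> s * s * exp \<bar>y\<bar>" using s by simp
  finally show ?thesis by (simp add: s_def power2_eq_square algebra_simps)
qed

lemma abs_le_one_plus_quadratic: "\<bar>y\<bar> \<le> 1 + y\<^sup>2 * exp \<bar>y::real\<bar>"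
proof -
  have "\<bar>y\<bar> \<le> 1 + y\<^sup>2"
  proof (cases "\<bar>y\<bar> \<le> 1")
    case False
    then have "\<bar>y\<bar> * 1 \<le> \<bar>y\<bar> * \<bar>y\<bar>" by (intro mult_left_mono) auto
    then show ?thesis by (simp add: power2_eq_square)
  qed (simp add: add_increasing2)
  also have "y\<^sup>2 \<le> y\<^sup>2 * exp \<bar>y\<bar>" using mult_left_mono[of 1 "exp \<bar>y\<bar>" "y\<^sup>2"] by simp
  finally show ?thesis by simp
qed

lemma (in prob_space) mgf_quadratic_bound:
  fixes g :: "'a \<Rightarrow> real"
  assumes g[measurable]: "g \<in> borel_measurable M"
    and int: "integrable M (\<lambda>x. (g x)\<^sup>2 * exp \<bar>g x\<bar>)"
    and l: "0 < l" "l \<le> 1"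
  shows "integrable M (\<lambda>x. exp (l * g x))"
    and "(\<integral>x. exp (l * g x) \<partial>M)
           \<le> exp (l * (\<integral>x. g x \<partial>M) + l\<^sup>2 * (\<integral>x. (g x)\<^sup>2 * exp \<bar>g x\<bar> \<partial>M))"
proof -
  have int_g: "integrable M g"
    by (rule Bochner_Integration.integrable_bound[OF Bochner_Integration.integrable_add[OF integrable_const[of 1] int]])
       (auto intro!: AE_I2 intro: order.trans[OF abs_le_one_plus_quadratic])
  have pointwise: "exp (l * g x) \<le> 1 + l * g x + l\<^sup>2 * ((g x)\<^sup>2 * exp \<bar>g x\<bar>)" for x
  proof -
    have "exp (l * g x) \<le> 1 + l * g x + (l * g x)\<^sup>2 * exp \<bar>l * g x\<bar>" by (rule exp_le_quadratic)
    also have "(l * g x)\<^sup>2 * exp \<bar>l * g x\<bar> \<le> (l * g x)\<^sup>2 * exp \<bar>g x\<bar>"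
      using l by (intro mult_left_mono) (auto simp: abs_mult mult_left_le_one_le)
    finally show ?thesis by (simp add: power_mult_distrib)
  qed
  have int_majorant: "integrable M (\<lambda>x. 1 + l * g x + l\<^sup>2 * ((g x)\<^sup>2 * exp \<bar>g x\<bar>))"
    using int_g int by auto
  show int_exp: "integrable M (\<lambda>x. exp (l * g x))"
    by (rule Bochner_Integration.integrable_bound[OF int_majorant])
       (auto intro!: AE_I2 order.trans[OF pointwise abs_ge_self])
  have "(\<integral>x. exp (l * g x) \<partial>M) \<le> (\<integral>x. 1 + l * g x + l\<^sup>2 * ((g x)\<^sup>2 * exp \<bar>g x\<bar>) \<partial>M)"
    by (intro integral_mono int_exp int_majorant pointwise)
  also have "\<dots> = 1 + l * (\<integral>x. g x \<partial>M) + l\<^sup>2 * (\<integral>x. (g x)\<^sup>2 * exp \<bar>g x\<bar> \<partial>M)"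
    using int_g int prob_space by simp
  also have "\<dots> \<le> exp (l * (\<integral>x. g x \<partial>M) + l\<^sup>2 * (\<integral>x. (g x)\<^sup>2 * exp \<bar>g x\<bar> \<partial>M))"
    by (simp add: exp_ge_add_one_self add.assoc)
  finally show "(\<integral>x. exp (l * g x) \<partial>M)
           \<le> exp (l * (\<integral>x. g x \<partial>M) + l\<^sup>2 * (\<integral>x. (g x)\<^sup>2 * exp \<bar>g x\<bar> \<partial>M))" .
qed

text \<open>Exponential Markov inequality for a sum of i.i.d. copies of \<open>g\<close> under the product measure:
  the moment generating function of the sum factorises.\<close>

lemma (in prob_space) iid_sum_exponential_markov:
  fixes g :: "'a \<Rightarrow> real"
  assumes g[measurable]: "g \<in> borel_measurable M"
    and int: "integrable M (\<lambda>x. exp (l * g x))" and l: "0 < l"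
  shows "measure (PiM {..<n} (\<lambda>_. M)) {\<omega> \<in> space (PiM {..<n} (\<lambda>_. M)). s \<le> (\<Sum>i<n. g (\<omega> i))}
           \<le> exp (- l * s) * (\<integral>x. exp (l * g x) \<partial>M) ^ n"
proof -
  let ?P = "PiM {..<n} (\<lambda>_. M)"
  interpret P: prob_space ?P by (intro prob_space_PiM prob_space_axioms)
  interpret product_sigma_finite "\<lambda>_. M"
    unfolding product_sigma_finite_def by (auto intro: sigma_finite_measure)
  have g_comp[measurable]: "(\<lambda>\<omega>. g (\<omega> i)) \<in> borel_measurable ?P" if "i < n" for i
    using that by (intro measurable_compose[OF measurable_component_singleton[of i "{..<n}" "\<lambda>_. M"] g]) auto
  define A where "A = {\<omega> \<in> space ?P. s \<le> (\<Sum>i<n. g (\<omega> i))}"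
  define m where "m = (\<integral>x. exp (l * g x) \<partial>M)"
  have m: "0 \<le> m" unfolding m_def by (intro integral_nonneg_AE) auto
  have A: "A \<in> sets ?P"
    unfolding A_def by (intro borel_measurable_le borel_measurable_sum g_comp) auto
  have "emeasure ?P A = (\<integral>\<^sup>+\<omega>. indicator A \<omega> \<partial>?P)"
    using A by simp
  also have "\<dots> \<le> (\<integral>\<^sup>+\<omega>. ennreal (exp (- l * s)) * (\<Prod>i<n. ennreal (exp (l * g (\<omega> i)))) \<partial>?P)"
  proof (intro nn_integral_mono)
    fix \<omega>
    have "ennreal (exp (- l * s)) * (\<Prod>i<n. ennreal (exp (l * g (\<omega> i))))
        = ennreal (exp (l * (\<Sum>i<n. g (\<omega> i)) - l * s))"
      by (simp add: prod_ennreal ennreal_mult[symmetric] exp_sum[symmetric] sum_distrib_left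
          exp_diff exp_minus field_simps)
    moreover have "1 \<le> exp (l * (\<Sum>i<n. g (\<omega> i)) - l * s)" if "\<omega> \<in> A"
      using that l unfolding A_def by (auto intro: mult_left_mono)
    ultimately show "indicator A \<omega> \<le> ennreal (exp (- l * s)) * (\<Prod>i<n. ennreal (exp (l * g (\<omega> i))))"
      by (cases "\<omega> \<in> A") (auto simp: indicator_def)
  qed
  also have "\<dots> = ennreal (exp (- l * s)) * (\<integral>\<^sup>+\<omega>. (\<Prod>i<n. ennreal (exp (l * g (\<omega> i)))) \<partial>?P)"
    by (intro nn_integral_cmult) auto
  also have "(\<integral>\<^sup>+\<omega>. (\<Prod>i<n. ennreal (exp (l * g (\<omega> i)))) \<partial>?P)
      = (\<Prod>i<n. (\<integral>\<^sup>+x. ennreal (exp (l * g x)) \<partial>M))"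
    by (rule product_nn_integral_prod[where f="\<lambda>i x. ennreal (exp (l * g x))"]) auto
  also have "(\<integral>\<^sup>+x. ennreal (exp (l * g x)) \<partial>M) = ennreal m"
    unfolding m_def by (intro nn_integral_eq_integral int) auto
  finally have "emeasure ?P A \<le> ennreal (exp (- l * s) * m ^ n)"
    using m by (simp add: ennreal_power ennreal_mult)
  moreover have "0 \<le> exp (- l * s) * m ^ n" using m by simp
  ultimately have "measure ?P A \<le> exp (- l * s) * m ^ n"
    by (metis P.emeasure_eq_measure ennreal_le_iff)
  then show ?thesis unfolding A_def m_def .
qed

text \<open>Upper deviations of i.i.d. sums by a fixed \<open>\<eta> > 0\<close> per sample have exponentially small
  probability; the rate is obtained by choosing \<open>l\<close> small in the two previous lemmas.\<close>

lemma (in prob_space) chernoff_iid_upper: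
  fixes g :: "'a \<Rightarrow> real"
  assumes g[measurable]: "g \<in> borel_measurable M"
    and int: "integrable M (\<lambda>x. (g x)\<^sup>2 * exp \<bar>g x\<bar>)" and \<eta>: "0 < \<eta>"
  shows "\<exists>c>0. \<forall>n. measure (PiM {..<n} (\<lambda>_. M))
           {\<omega> \<in> space (PiM {..<n} (\<lambda>_. M)). real n * ((\<integral>x. g x \<partial>M) + \<eta>) \<le> (\<Sum>i<n. g (\<omega> i))}
         \<le> exp (- c * real n)"
proof -
  define C where "C = (\<integral>x. (g x)\<^sup>2 * exp \<bar>g x\<bar> \<partial>M)"
  define l where "l = min 1 (\<eta> / (2 * (C + 1)))"
  have C: "0 \<le> C" unfolding C_def by (intro integral_nonneg_AE) auto
  have l: "0 < l" "l \<le> 1" using \<eta> C by (auto simp: l_def)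
  have "l * C \<le> \<eta> / (2 * (C + 1)) * C" using C by (intro mult_right_mono) (auto simp: l_def)
  also have "\<dots> \<le> \<eta> / 2" using C \<eta> by (simp add: field_simps)
  finally have lC: "l\<^sup>2 * C - l * \<eta> \<le> - (l * \<eta> / 2)"
    using l by (simp add: power2_eq_square mult.assoc mult_left_mono[of "l * C" "\<eta> / 2" l]
        algebra_simps)
  have bound: "measure (PiM {..<n} (\<lambda>_. M))
      {\<omega> \<in> space (PiM {..<n} (\<lambda>_. M)). real n * ((\<integral>x. g x \<partial>M) + \<eta>) \<le> (\<Sum>i<n. g (\<omega> i))}
      \<le> exp (- (l * \<eta> / 2) * real n)" for n
  proof -
    define E where "E = (\<integral>x. g x \<partial>M)"
    note mgf = mgf_quadratic_bound[OF g int l]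
    have "0 \<le> (\<integral>x. exp (l * g x) \<partial>M)" by (intro integral_nonneg_AE) auto
    then have "(\<integral>x. exp (l * g x) \<partial>M) ^ n \<le> exp (l * E + l\<^sup>2 * C) ^ n"
      using mgf(2) by (intro power_mono) (auto simp: E_def C_def)
    then have "exp (- l * (real n * (E + \<eta>))) * (\<integral>x. exp (l * g x) \<partial>M) ^ n
        \<le> exp (- l * (real n * (E + \<eta>))) * exp (l * E + l\<^sup>2 * C) ^ n"
      by (intro mult_left_mono) auto
    also have "\<dots> = exp (real n * (l\<^sup>2 * C - l * \<eta>))"
      by (simp add: exp_of_nat_mult[symmetric] exp_add[symmetric] algebra_simps)
    also have "\<dots> \<le> exp (- (l * \<eta> / 2) * real n)"
      using mult_left_mono[OF lC, of "real n"] by (simp add: mult.commute)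
    finally show ?thesis
      using iid_sum_exponential_markov[OF g mgf(1) l(1), where s="real n * (E + \<eta>)" and n=n]
      unfolding E_def by linarith
  qed
  moreover have "0 < l * \<eta> / 2" using l \<eta> by simp
  ultimately show ?thesis by blast
qed

text \<open>Lower deviations, by applying the upper bound to \<open>-g\<close>.\<close>

lemma (in prob_space) chernoff_iid_lower:
  fixes g :: "'a \<Rightarrow> real"
  assumes g[measurable]: "g \<in> borel_measurable M"
    and int: "integrable M (\<lambda>x. (g x)\<^sup>2 * exp \<bar>g x\<bar>)" and \<eta>: "0 < \<eta>"
  shows "\<exists>c>0. \<forall>n. measure (PiM {..<n} (\<lambda>_. M))
           {\<omega> \<in> space (PiM {..<n} (\<lambda>_. M)). (\<Sum>i<n. g (\<omega> i)) \<le> real n * ((\<integral>x. g x \<partial>M) - \<eta>)}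
         \<le> exp (- c * real n)"
proof -
  have "\<exists>c>0. \<forall>n. measure (PiM {..<n} (\<lambda>_. M))
      {\<omega> \<in> space (PiM {..<n} (\<lambda>_. M)). real n * ((\<integral>x. - g x \<partial>M) + \<eta>) \<le> (\<Sum>i<n. - g (\<omega> i))}
      \<le> exp (- c * real n)"
    using int \<eta> by (intro chernoff_iid_upper) auto
  moreover have "real n * ((\<integral>x. - g x \<partial>M) + \<eta>) \<le> (\<Sum>i<n. - g (\<omega> i))
      \<longleftrightarrow> (\<Sum>i<n. g (\<omega> i)) \<le> real n * ((\<integral>x. g x \<partial>M) - \<eta>)" for \<omega> n
    by (simp add: sum_negf algebra_simps)
  ultimately show ?thesis by simp
qed

lemma (in prob_space) prob_outside_two_events:
  assumes "E \<in> events" "A \<in> events" "B \<in> events" "space M - E \<subseteq> A \<union> B"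
  shows "1 - prob A - prob B \<le> prob E"
proof -
  have "prob (space M - E) \<le> prob (A \<union> B)"
    using assms by (intro finite_measure_mono) auto
  also have "\<dots> \<le> prob A + prob B"
    using assms by (intro measure_Un_le) auto
  finally show ?thesis using prob_compl[OF assms(1)] by simp
qed

section \<open>The standard Gaussian\<close>

abbreviation phi :: "real \<Rightarrow> real" where "phi \<equiv> std_normal_density"

lemma prob_space_std_gauss: "prob_space std_gauss"
  unfolding std_gauss_def by (rule prob_space_normal_density) simp

lemma sets_std_gauss[measurable_cong]: "sets std_gauss = sets borel"
  by (simp add: std_gauss_def)

lemma prob_space_gauss_vec: "prob_space (gauss_vec n)"
  unfolding gauss_vec_def by (intro prob_space_PiM prob_space_std_gauss)

lemma half_normal_measurable[measurable]: "half_normal \<in> borel_measurable borel"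
  unfolding half_normal_def by measurable

lemma half_normal_eq: "half_normal x = 2 * phi x"
proof -
  have "sqrt (2 / pi) * sqrt (2 * pi) = 2"
    by (simp add: real_sqrt_mult[symmetric])
  then have "sqrt (2 / pi) = 2 / sqrt (2 * pi)" by (simp add: field_simps)
  then show ?thesis by (simp add: half_normal_def std_normal_density_def)
qed

lemma integral_std_gauss:
  "f \<in> borel_measurable borel \<Longrightarrow> (\<integral>x. f x \<partial>std_gauss) = (\<integral>x. phi x * f x \<partial>lborel)"
  unfolding std_gauss_def by (subst integral_density) auto

lemma integrable_std_gauss_iff:
  "f \<in> borel_measurable borel \<Longrightarrow> integrable std_gauss f \<longleftrightarrow> integrable lborel (\<lambda>x. phi x * f x)"
  unfolding std_gauss_def by (subst integrable_density) auto

text \<open>Functions bounded by \<open>exp (10 + x\<^sup>2/4)\<close> are integrable against the Gaussian, by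
  comparison with the density of \<open>N(0,2)\<close>.\<close>

lemma integrable_std_gauss_subgaussian:
  assumes [measurable]: "F \<in> borel_measurable borel" and bound: "\<And>x. \<bar>F x\<bar> \<le> exp (10 + x\<^sup>2 / 4)"
  shows "integrable std_gauss F"
proof -
  have majorant: "phi x * exp (10 + x\<^sup>2 / 4) = exp 10 * sqrt 2 * normal_density 0 (sqrt 2) x" for x
  proof -
    have "exp (- x\<^sup>2 / 2) * exp (10 + x\<^sup>2 / 4) = exp 10 * exp (- x\<^sup>2 / 4)"
      unfolding mult_exp_exp by (simp add: field_simps)
    then have ph: "phi x * exp (10 + x\<^sup>2 / 4) = exp 10 * (1 / sqrt (2 * pi)) * exp (- x\<^sup>2 / 4)"
      unfolding std_normal_density_def by (simp add: field_simps)
    have nd: "normal_density 0 (sqrt 2) x = 1 / (sqrt 2 * sqrt (2 * pi)) * exp (- x\<^sup>2 / 4)"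
      by (simp add: normal_density_def real_sqrt_mult)
    have "exp 10 * sqrt 2 * normal_density 0 (sqrt 2) x
        = exp 10 * (sqrt 2 * (1 / (sqrt 2 * sqrt (2 * pi)))) * exp (- x\<^sup>2 / 4)"
      unfolding nd by (simp only: mult.assoc)
    also have "sqrt 2 * (1 / (sqrt 2 * sqrt (2 * pi))) = 1 / sqrt (2 * pi)" by simp
    finally show ?thesis using ph by simp
  qed
  have "integrable lborel (\<lambda>x. phi x * exp (10 + x\<^sup>2 / 4))"
    unfolding majorant by (intro integrable_mult_right) simp
  then have "integrable lborel (\<lambda>x. phi x * F x)"
    by (rule Bochner_Integration.integrable_bound)
       (auto intro!: AE_I2 mult_left_mono bound simp: abs_mult normal_density_nonneg)
  then show ?thesis by (simp add: integrable_std_gauss_iff)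
qed

lemma powr_le_one_plus_abs:
  assumes "0 < p" "p \<le> 1"
  shows "\<bar>x::real\<bar> powr p \<le> 1 + \<bar>x\<bar>"
proof (cases "\<bar>x\<bar> \<le> 1")
  case True
  then have "\<bar>x\<bar> powr p \<le> 1 powr p" using assms by (intro powr_mono2) auto
  then show ?thesis by simp
next
  case False
  then have "\<bar>x\<bar> powr p \<le> \<bar>x\<bar> powr 1" using assms by (intro powr_mono) auto
  then show ?thesis using False by simp
qed

lemma integrable_std_gauss_linear_growth:
  assumes [measurable]: "g \<in> borel_measurable borel" and growth: "\<And>x. \<bar>g x\<bar> \<le> 1 + \<bar>x\<bar>"
  shows "integrable std_gauss (\<lambda>x. (g x)\<^sup>2 * exp \<bar>g x\<bar>)"
proof (rule integrable_std_gauss_subgaussian)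
  fix x :: real
  have "\<bar>g x\<bar>\<^sup>2 \<le> (1 + \<bar>x\<bar>)\<^sup>2" by (rule power_mono[OF growth]) simp
  also have "\<dots> \<le> (exp \<bar>x\<bar>)\<^sup>2" by (intro power_mono exp_ge_add_one_self) auto
  also have "\<dots> = exp (2 * \<bar>x\<bar>)" by (simp only: power2_eq_square mult_exp_exp mult_2)
  finally have "(g x)\<^sup>2 \<le> exp (2 * \<bar>x\<bar>)" by simp
  moreover have "exp \<bar>g x\<bar> \<le> exp (1 + \<bar>x\<bar>)" using growth by simp
  ultimately have "(g x)\<^sup>2 * exp \<bar>g x\<bar> \<le> exp (2 * \<bar>x\<bar>) * exp (1 + \<bar>x\<bar>)"
    by (intro mult_mono) auto
  also have "\<dots> = exp (1 + 3 * \<bar>x\<bar>)" by (simp add: mult_exp_exp)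
  also have "\<dots> \<le> exp (10 + x\<^sup>2 / 4)"
  proof -
    have "0 \<le> (\<bar>x\<bar> / 2 - 3)\<^sup>2" by simp
    then show ?thesis by (simp add: power2_eq_square field_simps)
  qed
  finally show "\<bar>(g x)\<^sup>2 * exp \<bar>g x\<bar>\<bar> \<le> exp (10 + x\<^sup>2 / 4)" by simp
qed simp

lemma lborel_integral_even:
  fixes F :: "real \<Rightarrow> real"
  assumes [measurable]: "F \<in> borel_measurable borel" and even: "\<And>x. F (- x) = F x"
    and int: "integrable lborel F"
  shows "(\<integral>x. F x \<partial>lborel) = 2 * (\<integral>x. indicator {0..} x * F x \<partial>lborel)"
proof -
  have int_pos: "integrable lborel (\<lambda>x. indicator {0..} x * F x)"
    using integrable_mult_indicator[OF _ int, of "{0..}"] by simp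
  have int_neg: "integrable lborel (\<lambda>x. indicator {..<0} x * F x)"
    using integrable_mult_indicator[OF _ int, of "{..<0}"] by simp
  have "(\<integral>x. F x \<partial>lborel) = (\<integral>x. indicator {0..} x * F x + indicator {..<0} x * F x \<partial>lborel)"
    by (intro Bochner_Integration.integral_cong) (auto simp: indicator_def)
  also have "\<dots> = (\<integral>x. indicator {0..} x * F x \<partial>lborel) + (\<integral>x. indicator {..<0} x * F x \<partial>lborel)"
    using int_pos int_neg by simp
  also have "(\<integral>x. indicator {..<0} x * F x \<partial>lborel)
      = (\<integral>x. indicator {..<0} (0 + (-1) * x) * F (0 + (-1) * x) \<partial>lborel)"
    using lborel_integral_real_affine[of "-1" "\<lambda>x. indicator {..<0} x * F x" 0] by simp
  also have "\<dots> = (\<integral>x. indicator {0<..} x * F x \<partial>lborel)"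
    by (intro Bochner_Integration.integral_cong) (auto simp: indicator_def even)
  also have "\<dots> = (\<integral>x. indicator {0..} x * F x \<partial>lborel)"
  proof -
    have "AE x in lborel. indicator {0<..} x * F x = indicator {0..} x * F x"
      using AE_lborel_singleton[of 0] by eventually_elim (auto simp: indicator_def)
    then show ?thesis by (intro integral_cong_AE) auto
  qed
  finally show ?thesis by simp
qed

lemma std_gauss_radial_integral:
  fixes k :: "real \<Rightarrow> real"
  assumes [measurable]: "k \<in> borel_measurable borel" and t: "0 \<le> t"
    and int: "integrable lborel (\<lambda>x. phi x * (if t \<le> \<bar>x\<bar> then k \<bar>x\<bar> else 0))"
  shows "(\<integral>x. (if t \<le> \<bar>x\<bar> then k \<bar>x\<bar> else 0) \<partial>std_gauss)
       = (\<integral>x. indicator {t..} x * (half_normal x * k x) \<partial>lborel)"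
proof -
  have "(\<integral>x. (if t \<le> \<bar>x\<bar> then k \<bar>x\<bar> else 0) \<partial>std_gauss)
      = (\<integral>x. phi x * (if t \<le> \<bar>x\<bar> then k \<bar>x\<bar> else 0) \<partial>lborel)"
    by (rule integral_std_gauss) measurable
  also have "\<dots> = 2 * (\<integral>x. indicator {0..} x * (phi x * (if t \<le> \<bar>x\<bar> then k \<bar>x\<bar> else 0)) \<partial>lborel)"
    using int by (rule lborel_integral_even[rotated 2]) (auto simp: std_normal_density_def)
  also have "\<dots> = (\<integral>x. indicator {t..} x * (half_normal x * k x) \<partial>lborel)"
    using t by (subst integral_mult_right_zero[symmetric], intro Bochner_Integration.integral_cong)
      (auto simp: indicator_def half_normal_eq)
  finally show ?thesis .
qed

text \<open>Splitting an integral over a half-line, and the agreement of Lebesgue set integrals with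
  the gauge integrals used in the definitions of erf and \<open>z*(p)\<close>.\<close>

lemma integral_split_at:
  fixes f :: "real \<Rightarrow> real"
  assumes f_int: "set_integrable lborel {a..} f" and [measurable]: "f \<in> borel_measurable borel"
    and z: "a \<le> z"
  shows "integral {a..} f = integral {a..z} f + integral {z..} f"
proof -
  have int_left: "set_integrable lborel {a..<z} f" by (rule set_integrable_subset[OF f_int]) auto
  have int_right: "set_integrable lborel {z..} f" by (rule set_integrable_subset[OF f_int]) (use z in auto)
  have int_closed: "set_integrable lborel {a..z} f" by (rule set_integrable_subset[OF f_int]) auto
  have "integral {a..} f = (LINT x:{a..<z} \<union> {z..}|lborel. f x)"
    using z set_borel_integral_eq_integral(2)[OF f_int] by (simp add: ivl_disj_un)
  also have "\<dots> = (LINT x:{a..<z}|lborel. f x) + (LINT x:{z..}|lborel. f x)"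
    by (rule set_integral_Un[OF _ int_left int_right]) auto
  also have "(LINT x:{a..<z}|lborel. f x) = (LINT x:{a..z}|lborel. f x)"
  proof (rule set_integral_cong_set)
    show "AE x in lborel. (x \<in> {a..z}) = (x \<in> {a..<z})"
      using AE_lborel_singleton[of z] by eventually_elim auto
  qed (auto simp: set_borel_measurable_def)
  finally show ?thesis
    using set_borel_integral_eq_integral(2)[OF int_right] set_borel_integral_eq_integral(2)[OF int_closed]
    by simp
qed

lemma set_integral_eq_integral_on:
  fixes f :: "real \<Rightarrow> real"
  assumes "set_integrable lborel S f"
  shows "(\<integral>x. indicator S x * f x \<partial>lborel) = integral S f" "f integrable_on S"
  using set_borel_integral_eq_integral[OF assms] unfolding set_lebesgue_integral_def by auto

lemma set_integrable_half_normal_moment: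
  assumes p: "0 < p" "p \<le> 1" and S: "S \<in> sets borel" "S \<subseteq> {0..}"
  shows "set_integrable lborel S (\<lambda>x. x powr p * half_normal x)"
proof -
  have "integrable lborel (\<lambda>x. 2 * (phi x + phi x * \<bar>x\<bar> ^ 1))"
    using integrable_std_normal_moment_abs[of 1] by auto
  then have "set_integrable lborel {0..} (\<lambda>x. x powr p * half_normal x)"
    unfolding set_integrable_def
  proof (rule Bochner_Integration.integrable_bound)
    show "(\<lambda>x. indicator {0..} x *\<^sub>R (x powr p * half_normal x)) \<in> borel_measurable lborel"
      unfolding half_normal_def by measurable
    have "\<bar>indicator {0..} x * (x powr p * half_normal x)\<bar> \<le> 2 * (phi x + phi x * \<bar>x\<bar>)" for x :: real
    proof (cases "x \<ge> 0")
      case True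
      have "\<bar>x powr p\<bar> \<le> 1 + \<bar>x\<bar>" using powr_le_one_plus_abs[OF p, of x] True by auto
      then have "\<bar>x powr p * half_normal x\<bar> \<le> (1 + \<bar>x\<bar>) * (2 * phi x)"
        by (auto simp: abs_mult half_normal_eq intro!: mult_right_mono)
      then show ?thesis using True by (simp add: algebra_simps)
    next
      case False
      have "indicator {0..} x = (0::real)" using False by simp
      moreover have "0 \<le> phi x + phi x * \<bar>x\<bar>" by (intro add_nonneg_nonneg) simp_all
      ultimately show ?thesis by simp
    qed
    then show "AE x in lborel. norm (indicator {0..} x *\<^sub>R (x powr p * half_normal x))
        \<le> norm (2 * (phi x + phi x * \<bar>x\<bar> ^ 1))"
      by (intro AE_I2) (simp add: abs_mult)
  qed
  then show ?thesis by (rule set_integrable_subset) (use S in auto)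
qed

lemma set_integrable_half_normal:
  assumes "S \<in> sets borel" "S \<subseteq> {0..}"
  shows "set_integrable lborel S half_normal"
proof -
  have "set_integrable lborel {0..} half_normal"
    unfolding set_integrable_def half_normal_eq
    by (rule Bochner_Integration.integrable_bound[where f="\<lambda>x. 2 * phi x"])
       (auto intro!: AE_I2 simp: indicator_def)
  then show ?thesis by (rule set_integrable_subset) (use assms in auto)
qed

text \<open>The error function in terms of the half-normal density (substitution \<open>x = \<surd>2 u\<close>).\<close>

lemma erf_half_normal:
  assumes z: "0 \<le> z"
  shows "erf (z / sqrt 2) = integral {0..z} half_normal"
proof -
  define m :: real where "m = 1 / sqrt 2"
  have m: "m \<noteq> 0" "1 / \<bar>m\<bar> = sqrt 2" by (simp_all add: m_def)
  have image: "(\<lambda>x. x / m) ` {0..z / sqrt 2} = {0..z}"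
  proof (intro equalityI subsetI)
    fix y assume "y \<in> (\<lambda>x. x / m) ` {0..z / sqrt 2}"
    then show "y \<in> {0..z}" by (auto simp: m_def field_simps)
  next
    fix y assume y: "y \<in> {0..z}"
    have "y / sqrt 2 \<in> {0..z / sqrt 2}" using y by (auto simp: divide_right_mono)
    moreover have "y = (y / sqrt 2) / m" by (simp add: m_def)
    ultimately show "y \<in> (\<lambda>x. x / m) ` {0..z / sqrt 2}" by blast
  qed
  have stretch: "exp (- (m * x)\<^sup>2) = exp (- x\<^sup>2 / 2)" for x
    by (simp add: m_def power_mult_distrib power_divide)
  have "integral {0..z} (\<lambda>x. exp (- x\<^sup>2 / 2)) = (1 / \<bar>m\<bar>) *\<^sub>R integral {0..z / sqrt 2} (\<lambda>t. exp (- t\<^sup>2))"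
    using integral_stretch_real[OF m(1), where f="\<lambda>t. exp (- t\<^sup>2)" and a=0 and b="z / sqrt 2"]
    unfolding image stretch .
  then have substitution:
      "integral {0..z} (\<lambda>x. exp (- x\<^sup>2 / 2)) = sqrt 2 * integral {0..z / sqrt 2} (\<lambda>t. exp (- t\<^sup>2))"
    unfolding m(2) by simp
  have "integral {0..z} half_normal = sqrt (2 / pi) * integral {0..z} (\<lambda>x. exp (- x\<^sup>2 / 2))"
    by (simp add: half_normal_def[abs_def])
  also have "\<dots> = sqrt (2 / pi) * sqrt 2 * integral {0..z / sqrt 2} (\<lambda>t. exp (- t\<^sup>2))"
    by (simp only: substitution mult.assoc)
  also have "sqrt (2 / pi) * sqrt 2 = 2 / sqrt pi"
    by (simp add: real_sqrt_divide)
  finally show ?thesis by (simp add: erf_def)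
qed

lemma std_gauss_prob_abs_ge:
  assumes t: "0 \<le> t"
  shows "(\<integral>x. (if t \<le> \<bar>x\<bar> then 1 else 0) \<partial>std_gauss) = 1 - erf (t / sqrt 2)"
proof -
  have tail: "(\<integral>x. (if s \<le> \<bar>x\<bar> then 1 else 0) \<partial>std_gauss) = integral {s..} half_normal"
    if s: "0 \<le> s" for s
  proof -
    have "integrable lborel (\<lambda>x. phi x * (if s \<le> \<bar>x\<bar> then (\<lambda>_. 1::real) \<bar>x\<bar> else 0))"
      by (rule Bochner_Integration.integrable_bound[where f=phi]) (auto intro!: AE_I2)
    then have "(\<integral>x. (if s \<le> \<bar>x\<bar> then (\<lambda>_. 1::real) \<bar>x\<bar> else 0) \<partial>std_gauss)
        = (\<integral>x. indicator {s..} x * (half_normal x * 1) \<partial>lborel)"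
      by (rule std_gauss_radial_integral[OF _ s, rotated]) simp
    also have "\<dots> = integral {s..} half_normal"
      using set_integral_eq_integral_on(1)[OF set_integrable_half_normal[of "{s..}"]] s by simp
    finally show ?thesis by simp
  qed
  interpret prob_space std_gauss by (rule prob_space_std_gauss)
  have "integral {0..} half_normal = 1"
    using tail[of 0] prob_space by simp
  moreover have "integral {0..} half_normal = integral {0..t} half_normal + integral {t..} half_normal"
    using t by (intro integral_split_at set_integrable_half_normal) (auto simp: half_normal_def)
  ultimately show ?thesis using tail[OF t] erf_half_normal[OF t] by simp
qed

lemma integrable_truncated_moment:
  assumes p: "0 < p" "p \<le> 1"
  shows "integrable lborel (\<lambda>x. phi x * (if t \<le> \<bar>x\<bar> then \<bar>x\<bar> powr p else 0))"
proof (rule Bochner_Integration.integrable_bound[where f="\<lambda>x. phi x + phi x * \<bar>x\<bar> ^ 1"])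
  show "integrable lborel (\<lambda>x. phi x + phi x * \<bar>x\<bar> ^ 1)"
    using integrable_std_normal_moment_abs[of 1] by auto
  have "phi x * \<bar>x\<bar> powr p \<le> phi x * (1 + \<bar>x\<bar>)" for x
    by (intro mult_left_mono powr_le_one_plus_abs p) simp
  then show "AE x in lborel. norm (phi x * (if t \<le> \<bar>x\<bar> then \<bar>x\<bar> powr p else 0))
      \<le> norm (phi x + phi x * \<bar>x\<bar> ^ 1)"
    by (intro AE_I2) (auto simp: abs_mult algebra_simps)
qed measurable

lemma std_gauss_truncated_moment:
  assumes p: "0 < p" "p \<le> 1" and t: "0 \<le> t"
  shows "(\<integral>x. (if t \<le> \<bar>x\<bar> then \<bar>x\<bar> powr p else 0) \<partial>std_gauss)
       = integral {t..} (\<lambda>x. x powr p * half_normal x)"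
proof -
  have "integrable lborel (\<lambda>x. phi x * (if t \<le> \<bar>x\<bar> then (\<lambda>x. x powr p) \<bar>x\<bar> else 0))"
    using integrable_truncated_moment[OF p] by simp
  then have "(\<integral>x. (if t \<le> \<bar>x\<bar> then (\<lambda>x. x powr p) \<bar>x\<bar> else 0) \<partial>std_gauss)
      = (\<integral>x. indicator {t..} x * (half_normal x * x powr p) \<partial>lborel)"
    by (rule std_gauss_radial_integral[OF _ t, rotated]) measurable
  also have "\<dots> = integral {t..} (\<lambda>x. x powr p * half_normal x)"
    using set_integral_eq_integral_on(1)[OF set_integrable_half_normal_moment[OF p, of "{t..}"]] t
    by (simp add: mult.commute)
  finally show ?thesis by simp
qed

text \<open>Since \<open>S\<^sub>1\<close> is the sum of all \<open>|X\<^sub>i|^p\<close>, its mean is \<open>S = n \<integral>\<^sub>0\<^sup>\<infinity> x^p f(x) dx\<close>.\<close>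

lemma S_mean_eq:
  assumes p: "0 < p" "p \<le> 1"
  shows "S_mean p n = real n * integral {0..} (\<lambda>x. x powr p * half_normal x)"
proof -
  have S1: "S_rho p n 1 \<omega> = (\<Sum>i<n. \<bar>\<omega> i\<bar> powr p)" for \<omega>
  proof -
    have "S_rho p n 1 \<omega> = sum_list (map (\<lambda>i. \<bar>\<omega> i\<bar> powr p) [0..<n])"
      unfolding S_rho_def Ys_def by (simp flip: sum_mset_sum_list)
    then show ?thesis by (simp add: sum_list_sum_nth atLeast0LessThan)
  qed
  have moment: "(\<integral>x. \<bar>x\<bar> powr p \<partial>std_gauss) = integral {0..} (\<lambda>x. x powr p * half_normal x)"
    using std_gauss_truncated_moment[OF p, of 0] by simp
  have moment_int: "integrable std_gauss (\<lambda>x. \<bar>x\<bar> powr p)"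
  proof -
    have "integrable lborel (\<lambda>x. phi x * \<bar>x\<bar> powr p)"
      using integrable_truncated_moment[OF p, of 0] by simp
    then show ?thesis by (subst integrable_std_gauss_iff) auto
  qed
  have component: "distr (gauss_vec n) std_gauss (\<lambda>\<omega>. \<omega> i) = std_gauss"
    and component_meas: "(\<lambda>\<omega>. \<omega> i) \<in> measurable (gauss_vec n) std_gauss" if "i < n" for i
    unfolding gauss_vec_def using that
    by (auto intro: distr_PiM_component prob_space_std_gauss measurable_component_singleton)
  have "S_mean p n = (\<integral>\<omega>. (\<Sum>i<n. \<bar>\<omega> i\<bar> powr p) \<partial>gauss_vec n)"
    unfolding S_mean_def S1 ..
  also have "\<dots> = (\<Sum>i<n. \<integral>\<omega>. \<bar>\<omega> i\<bar> powr p \<partial>gauss_vec n)"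
    using integrable_distr_eq[OF component_meas, where f="\<lambda>x. \<bar>x\<bar> powr p"] component moment_int
    by (intro Bochner_Integration.integral_sum) auto
  also have "\<dots> = (\<Sum>i<n. \<integral>x. \<bar>x\<bar> powr p \<partial>std_gauss)"
    using integral_distr[OF component_meas, where f="\<lambda>x. \<bar>x\<bar> powr p"] component
    by (intro sum.cong) auto
  finally show ?thesis by (simp add: moment)
qed

section \<open>The balancing point \<open>z*(p)\<close>\<close>

text \<open>Throughout this section \<open>0 < p \<le> 1\<close> is fixed and \<open>h(x) = x^p f(x)\<close> denotes the moment
  density on \<open>[0, \<infinity>)\<close>, whose total mass is \<open>E |X|^p\<close>.\<close>

context
  fixes p :: real
  assumes p: "0 < p" "p \<le> 1"
begin

abbreviation moment_dens :: "real \<Rightarrow> real" where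
  "moment_dens \<equiv> (\<lambda>x. x powr p * half_normal x)"

lemma moment_dens_nonneg: "0 \<le> x \<Longrightarrow> 0 \<le> moment_dens x"
  by (simp add: half_normal_def)

lemma moment_dens_integrable_on:
  "0 \<le> a \<Longrightarrow> moment_dens integrable_on {a..b}" "0 \<le> a \<Longrightarrow> moment_dens integrable_on {a..}"
  by (rule set_integral_eq_integral_on(2)[OF set_integrable_half_normal_moment[OF p]]; auto)+

lemma moment_split: "0 \<le> z \<Longrightarrow>
    integral {0..} moment_dens = integral {0..z} moment_dens + integral {z..} moment_dens"
  by (rule integral_split_at[OF set_integrable_half_normal_moment[OF p]]) auto

lemma moment_tail_nonneg: "0 \<le> z \<Longrightarrow> 0 \<le> integral {z..} moment_dens"
  by (rule integral_nonneg[OF moment_dens_integrable_on(2)]) (auto intro: moment_dens_nonneg)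

text \<open>The moment density is positive on \<open>(0, \<infinity>)\<close>, so every interval carries positive mass.\<close>

lemma moment_interval_pos:
  assumes "0 \<le> a" "a < b"
  shows "0 < integral {a..b} moment_dens"
proof -
  define m where "m = (a + b) / 2"
  have m: "0 < m" "a \<le> m" "m < b" using assms by (auto simp: m_def)
  define \<kappa> where "\<kappa> = m powr p * half_normal b"
  have \<kappa>: "0 < \<kappa>" using m by (simp add: \<kappa>_def half_normal_def)
  have "integral {m..b} (\<lambda>x. \<kappa>) \<le> integral {m..b} moment_dens"
  proof (rule integral_le)
    show "moment_dens integrable_on {m..b}" using m by (intro moment_dens_integrable_on) auto
    fix x assume x: "x \<in> {m..b}"
    have "m powr p \<le> x powr p" using x m p by (intro powr_mono2) auto
    moreover have "half_normal b \<le> half_normal x"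
      using x m by (simp add: half_normal_def power_mono)
    ultimately show "\<kappa> \<le> moment_dens x" unfolding \<kappa>_def
      by (intro mult_mono) (auto simp: half_normal_def)
  qed (rule integrable_const_ivl)
  moreover have "integral {m..b} (\<lambda>x. \<kappa>) = (b - m) * \<kappa>" using m by simp
  moreover have "0 < (b - m) * \<kappa>" using m \<kappa> by simp
  moreover have "0 \<le> integral {a..m} moment_dens"
    using assms by (intro integral_nonneg moment_dens_integrable_on) (auto intro: moment_dens_nonneg)
  moreover have "integral {a..m} moment_dens + integral {m..b} moment_dens = integral {a..b} moment_dens"
    using m assms moment_dens_integrable_on(1)[of a b]
    by (intro Henstock_Kurzweil_Integration.integral_combine) auto
  ultimately show ?thesis by linarith
qed

lemma moment_partial_strict_mono:
  "0 \<le> z1 \<Longrightarrow> z1 < z2 \<Longrightarrow> integral {0..z1} moment_dens < integral {0..z2} moment_dens"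
  using Henstock_Kurzweil_Integration.integral_combine[where f=moment_dens and a=0 and c=z1 and b=z2]
    moment_dens_integrable_on(1)[of 0 z2] moment_interval_pos[of z1 z2] by auto

lemma moment_pos: "0 < integral {0..} moment_dens"
  using moment_split[of 1] moment_tail_nonneg[of 1] moment_interval_pos[of 0 1] by simp

text \<open>Markov-type tail bound: the mass of \<open>x^p f(x)\<close> beyond \<open>Z\<close> is \<open>O(1/Z)\<close>.\<close>

lemma moment_tail_decay: "\<exists>B\<ge>0. \<forall>Z\<ge>1. integral {Z..} moment_dens \<le> B / Z"
proof -
  define F where "F = (\<lambda>x. 2 * (phi x * \<bar>x\<bar> ^ 1 + phi x * \<bar>x\<bar> ^ 2))"
  have F_int: "integrable lborel F" unfolding F_def
    using integrable_std_normal_moment_abs[of 1] integrable_std_normal_moment_abs[of 2] by auto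
  define B where "B = (\<integral>x. F x \<partial>lborel)"
  have B: "0 \<le> B" unfolding B_def F_def by (intro integral_nonneg_AE) auto
  have "integral {Z..} moment_dens \<le> B / Z" if Z: "Z \<ge> 1" for Z
  proof -
    have int: "set_integrable lborel {Z..} moment_dens"
      using Z by (intro set_integrable_half_normal_moment p) auto
    have "integral {Z..} moment_dens = (\<integral>x. indicator {Z..} x * moment_dens x \<partial>lborel)"
      using set_integral_eq_integral_on(1)[OF int] by simp
    also have "\<dots> \<le> (\<integral>x. F x / Z \<partial>lborel)"
    proof (rule integral_mono)
      show "integrable lborel (\<lambda>x. indicator {Z..} x * moment_dens x)"
        using int by (simp add: set_integrable_def)
      show "integrable lborel (\<lambda>x. F x / Z)" using F_int by simp
      fix x :: real
      show "indicator {Z..} x * moment_dens x \<le> F x / Z"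
      proof (cases "Z \<le> x")
        case True
        then have x: "0 \<le> x" "1 \<le> x / Z" using Z by auto
        have "x powr p \<le> 1 + x" using powr_le_one_plus_abs[OF p, of x] x by simp
        then have "moment_dens x \<le> (1 + x) * (2 * phi x)"
          by (auto simp: half_normal_eq intro!: mult_right_mono)
        also have "\<dots> \<le> (x / Z) * ((1 + x) * (2 * phi x))"
          using mult_right_mono[OF x(2), of "(1 + x) * (2 * phi x)"] x by simp
        also have "\<dots> = F x / Z" using x by (simp add: F_def power2_eq_square field_simps)
        finally show ?thesis using True by simp
      next
        case False
        have "0 \<le> F x" unfolding F_def by simp
        then show ?thesis using False Z by (simp add: indicator_def)
      qed
    qed
    also have "\<dots> = B / Z" by (simp add: B_def)
    finally show ?thesis .
  qed
  then show ?thesis using B by blast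
qed

text \<open>By continuity and strict monotonicity of the partial integral, the equation defining
  \<open>z*(p)\<close> has exactly one positive solution, so the definite description is well defined.\<close>

lemma zstar_spec:
  "0 < zstar p \<and> integral {0..zstar p} moment_dens = integral {zstar p..} moment_dens"
proof -
  define \<mu> where "\<mu> = integral {0..} moment_dens"
  define P where "P = (\<lambda>z. 0 < z \<and> integral {0..z} moment_dens = integral {z..} moment_dens)"
  have \<mu>: "0 < \<mu>" using moment_pos by (simp add: \<mu>_def)
  have P_iff: "P z \<longleftrightarrow> 0 < z \<and> integral {0..z} moment_dens = \<mu> / 2" for z
    using moment_split[of z] by (auto simp: P_def \<mu>_def)
  obtain B where B: "B \<ge> 0" "\<And>Z. Z \<ge> 1 \<Longrightarrow> integral {Z..} moment_dens \<le> B / Z"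
    using moment_tail_decay by blast
  define Z where "Z = 1 + 2 * B / \<mu>"
  have Z: "Z \<ge> 1" using B \<mu> by (simp add: Z_def)
  have "B < \<mu> / 2 * Z" using B \<mu> by (simp add: Z_def field_simps)
  then have "B / Z < \<mu> / 2" using Z by (simp add: field_simps)
  then have "integral {Z..} moment_dens < \<mu> / 2" using B(2)[OF Z] by linarith
  then have "\<mu> / 2 \<le> integral {0..Z} moment_dens" using moment_split[of Z] Z by (simp add: \<mu>_def)
  moreover have "continuous_on {0..Z} (\<lambda>z. integral {0..z} moment_dens)"
    by (rule indefinite_integral_continuous_1[OF moment_dens_integrable_on(1)]) simp
  ultimately obtain z where z: "0 \<le> z" "z \<le> Z" "integral {0..z} moment_dens = \<mu> / 2"
    using IVT'[of "\<lambda>z. integral {0..z} moment_dens" 0 "\<mu> / 2" Z] \<mu> Z by auto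
  then have "P z" using \<mu> P_iff by (cases "z = 0") auto
  moreover have "y = z" if "P y" for y
    using that P_iff z moment_partial_strict_mono[of y z] moment_partial_strict_mono[of z y]
    by (cases y z rule: linorder_cases) auto
  ultimately have "P (THE z. P z)" by (rule theI)
  then show ?thesis unfolding zstar_def P_def by simp
qed

lemma moment_tail_below_half:
  assumes "zstar p < t"
  shows "integral {t..} moment_dens < integral {0..} moment_dens / 2"
proof -
  have z: "0 < zstar p" "integral {0..zstar p} moment_dens = integral {zstar p..} moment_dens"
    using zstar_spec by auto
  have "integral {0..} moment_dens = 2 * integral {0..zstar p} moment_dens"
    using moment_split[of "zstar p"] z by simp
  moreover have "integral {0..zstar p} moment_dens < integral {0..t} moment_dens"
    using moment_partial_strict_mono[of "zstar p" t] z assms by simp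
  ultimately show ?thesis using moment_split[of t] z assms by simp
qed

end

text \<open>Continuity of erf: a threshold slightly above \<open>z*(p)\<close> keeps \<open>P(|X| \<ge> t)\<close> above any
  \<open>\<rho> < \<rho>*(p)\<close>.\<close>

lemma threshold_above_zstar:
  assumes p: "0 < p" "p \<le> 1" and \<rho>: "\<rho> < rhostar p"
  obtains t where "zstar p < t" "\<rho> < 1 - erf (t / sqrt 2)"
proof -
  define z where "z = zstar p"
  define I where "I t = integral {0..t} half_normal" for t
  have z: "0 < z" using zstar_spec[OF p] by (simp add: z_def)
  have "continuous_on {0..z + 1} I"
    unfolding I_def
    by (rule indefinite_integral_continuous_1[OF set_integral_eq_integral_on(2)[OF set_integrable_half_normal]])
      auto
  then have "isCont I z"
    using z by (intro continuous_on_interior[of "{0..z + 1}"]) auto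
  then have "((\<lambda>t. 1 - I t) \<longlongrightarrow> 1 - I z) (at_right z)"
    by (intro tendsto_diff tendsto_const) (simp add: isCont_def filterlim_at_split)
  moreover have "1 - I z = rhostar p"
    unfolding rhostar_def I_def z_def using erf_half_normal z z_def by simp
  ultimately have "\<forall>\<^sub>F t in at_right z. \<rho> < 1 - I t"
    using \<rho> by (auto dest: order_tendstoD)
  then have "\<forall>\<^sub>F t in at_right z. z < t \<and> \<rho> < 1 - I t"
    using eventually_at_right_less by (rule eventually_conj[rotated])
  then obtain t where "z < t" "\<rho> < 1 - I t"
    using eventually_happens'[OF trivial_limit_at_right_real] by blast
  moreover have "erf (t / sqrt 2) = I t" using z \<open>z < t\<close> by (simp add: I_def erf_half_normal)
  ultimately show ?thesis using that by (simp add: z_def)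
qed

section \<open>The Gaussian sample\<close>

lemma gauss_vec_component_measurable:
  assumes g: "g \<in> borel_measurable borel" and i: "i < n"
  shows "(\<lambda>\<omega>. g (\<omega> i)) \<in> borel_measurable (gauss_vec n)"
proof -
  have "(\<lambda>\<omega>. \<omega> i) \<in> borel_measurable (gauss_vec n)"
    using measurable_component_singleton[of i "{..<n}" "\<lambda>_. std_gauss"] i
    by (simp add: gauss_vec_def measurable_cong_sets[OF refl sets_std_gauss])
  then show ?thesis using g by (rule measurable_compose)
qed

lemma gauss_vec_sum_measurable:
  fixes g :: "real \<Rightarrow> real"
  assumes "g \<in> borel_measurable borel"
  shows "(\<lambda>\<omega>. \<Sum>i<n. g (\<omega> i)) \<in> borel_measurable (gauss_vec n)"
  by (intro borel_measurable_sum gauss_vec_component_measurable[OF assms]) auto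

lemma S_rho_event_measurable:
  "{\<omega> \<in> space (gauss_vec n). S_rho p n \<rho> \<omega> \<le> K} \<in> sets (gauss_vec n)"
proof -
  define k where "k = nat \<lceil>\<rho> * real n\<rceil>"
  have component: "(\<lambda>\<omega>. \<bar>\<omega> i\<bar> powr p) \<in> borel_measurable (gauss_vec n)" if "i < n" for i
    using that by (intro gauss_vec_component_measurable) auto
  have "Measurable.pred (gauss_vec n) (\<lambda>\<omega>. sum_list (take k (rev (sort (map (\<lambda>i. \<bar>\<omega> i\<bar> powr p) [0..<n])))) \<le> K)"
  proof (rule pred_sorted_rearrangement[where P="\<lambda>xs. sum_list (take k (rev xs)) \<le> K"])
    fix \<pi> assume \<pi>: "\<pi> permutes {..<n}"
    have "sum_list (take k (rev (map g [0..<n]))) = (\<Sum>j<min k n. g (n - Suc j))" for g :: "nat \<Rightarrow> real"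
      by (simp add: sum_list_sum_nth rev_nth atLeast0LessThan min.commute)
    moreover have "\<pi> (n - Suc j) < n" if "j < min k n" for j
      using permutes_in_image[OF \<pi>] that by auto
    ultimately show "Measurable.pred (gauss_vec n)
        (\<lambda>\<omega>. sum_list (take k (rev (map (\<lambda>j. \<bar>\<omega> (\<pi> j)\<bar> powr p) [0..<n]))) \<le> K)"
      unfolding pred_def by (auto intro!: borel_measurable_le borel_measurable_sum component)
  qed (rule component)
  then show ?thesis unfolding pred_def S_rho_def Ys_def k_def .
qed

lemma gauss_vec_chernoff:
  fixes g :: "real \<Rightarrow> real"
  assumes g[measurable]: "g \<in> borel_measurable borel" and growth: "\<And>x. \<bar>g x\<bar> \<le> 1 + \<bar>x\<bar>"
    and \<eta>: "0 < \<eta>"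
  shows "\<exists>c>0. \<forall>n. measure (gauss_vec n)
           {\<omega> \<in> space (gauss_vec n). real n * ((\<integral>x. g x \<partial>std_gauss) + \<eta>) \<le> (\<Sum>i<n. g (\<omega> i))}
         \<le> exp (- c * real n)"
    and "\<exists>c>0. \<forall>n. measure (gauss_vec n)
           {\<omega> \<in> space (gauss_vec n). (\<Sum>i<n. g (\<omega> i)) \<le> real n * ((\<integral>x. g x \<partial>std_gauss) - \<eta>)}
         \<le> exp (- c * real n)"
proof -
  interpret prob_space std_gauss by (rule prob_space_std_gauss)
  have g': "g \<in> borel_measurable std_gauss" by simp
  note int = integrable_std_gauss_linear_growth[OF g growth]
  show "\<exists>c>0. \<forall>n. measure (gauss_vec n)
           {\<omega> \<in> space (gauss_vec n). real n * ((\<integral>x. g x \<partial>std_gauss) + \<eta>) \<le> (\<Sum>i<n. g (\<omega> i))}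
         \<le> exp (- c * real n)"
    unfolding gauss_vec_def by (rule chernoff_iid_upper[OF g' int \<eta>])
  show "\<exists>c>0. \<forall>n. measure (gauss_vec n)
           {\<omega> \<in> space (gauss_vec n). (\<Sum>i<n. g (\<omega> i)) \<le> real n * ((\<integral>x. g x \<partial>std_gauss) - \<eta>)}
         \<le> exp (- c * real n)"
    unfolding gauss_vec_def by (rule chernoff_iid_lower[OF g' int \<eta>])
qed

lemma count_above_concentration:
  assumes t: "0 \<le> t" and \<eta>: "0 < \<eta>"
  shows "\<exists>c>0. \<forall>n. measure (gauss_vec n) {\<omega> \<in> space (gauss_vec n).
           (\<Sum>i<n. if t \<le> \<bar>\<omega> i\<bar> then 1 else 0) \<le> real n * (1 - erf (t / sqrt 2) - \<eta>)}
         \<le> exp (- c * real n)"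
proof -
  have "(\<lambda>x. if t \<le> \<bar>x\<bar> then 1 else 0 :: real) \<in> borel_measurable borel"
    "\<And>x. \<bar>if t \<le> \<bar>x\<bar> then 1 else 0 :: real\<bar> \<le> 1 + \<bar>x\<bar>"
    by auto
  from gauss_vec_chernoff(2)[OF this \<eta>] show ?thesis
    by (simp add: std_gauss_prob_abs_ge[OF t])
qed

lemma truncated_sum_concentration:
  assumes p: "0 < p" "p \<le> 1" and t: "0 \<le> t" and \<eta>: "0 < \<eta>"
  shows "\<exists>c>0. \<forall>n. measure (gauss_vec n) {\<omega> \<in> space (gauss_vec n).
           real n * (integral {t..} (\<lambda>x. x powr p * half_normal x) + \<eta>)
             \<le> (\<Sum>i<n. if t \<le> \<bar>\<omega> i\<bar> then \<bar>\<omega> i\<bar> powr p else 0)}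
         \<le> exp (- c * real n)"
proof -
  have "(\<lambda>x. if t \<le> \<bar>x\<bar> then \<bar>x\<bar> powr p else 0) \<in> borel_measurable borel"
    "\<And>x. \<bar>if t \<le> \<bar>x\<bar> then \<bar>x\<bar> powr p else 0\<bar> \<le> 1 + \<bar>x\<bar>"
    using powr_le_one_plus_abs[OF p] by auto
  from gauss_vec_chernoff(1)[OF this \<eta>] show ?thesis
    by (simp add: std_gauss_truncated_moment[OF p t])
qed

lemma S_rho_le_truncated_sum:
  assumes p: "0 < p" and t: "0 < t"
    and enough: "nat \<lceil>\<rho> * real n\<rceil> \<le> card {i\<in>{..<n}. t \<le> \<bar>\<omega> i\<bar>}"
  shows "S_rho p n \<rho> \<omega> \<le> (\<Sum>i<n. if t \<le> \<bar>\<omega> i\<bar> then \<bar>\<omega> i\<bar> powr p else 0)"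
proof -
  have above_iff: "t powr p \<le> \<bar>x\<bar> powr p \<longleftrightarrow> t \<le> \<bar>x\<bar>" for x :: real
  proof
    show "t \<le> \<bar>x\<bar> \<Longrightarrow> t powr p \<le> \<bar>x\<bar> powr p" using p t by (intro powr_mono2) auto
    show "t powr p \<le> \<bar>x\<bar> powr p \<Longrightarrow> t \<le> \<bar>x\<bar>"
      using p powr_less_mono2[of p "\<bar>x\<bar>" t] by (cases "t \<le> \<bar>x\<bar>") auto
  qed
  have "length (filter (\<lambda>v. t powr p \<le> v) (map (\<lambda>i. \<bar>\<omega> i\<bar> powr p) [0..<n]))
      = card {i\<in>{..<n}. t \<le> \<bar>\<omega> i\<bar>}"
    by (simp only: length_filter_map_upt above_iff)
  then have "S_rho p n \<rho> \<omega> \<le> sum_list (filter (\<lambda>v. t powr p \<le> v) (map (\<lambda>i. \<bar>\<omega> i\<bar> powr p) [0..<n]))"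
    unfolding S_rho_def Ys_def using enough by (intro sum_largest_le_sum_above) auto
  also have "\<dots> = (\<Sum>i<n. if t \<le> \<bar>\<omega> i\<bar> then \<bar>\<omega> i\<bar> powr p else 0)"
    by (simp only: sum_list_filter_map_upt above_iff)
  finally show ?thesis .
qed

text \<open>On a sample with many values above \<open>t\<close> and a light truncated sum, \<open>S\<^sub>\<rho>\<close> is small;
  \<open>n (q - \<rho>) \<ge> 2\<close> makes \<open>(q + \<rho>) n / 2\<close> exceed \<open>\<lceil>\<rho> n\<rceil>\<close>.\<close>

lemma S_rho_below_on_typical_sample:
  assumes p: "0 < p" and t: "0 < t" and n: "2 \<le> real n * (q - \<rho>)"
    and many: "real n * (q - (q - \<rho>) / 2) < (\<Sum>i<n. if t \<le> \<bar>\<omega> i\<bar> then 1 else 0)"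
    and light: "(\<Sum>i<n. if t \<le> \<bar>\<omega> i\<bar> then \<bar>\<omega> i\<bar> powr p else 0) < K"
  shows "S_rho p n \<rho> \<omega> < K"
proof -
  have "(\<Sum>i<n. if t \<le> \<bar>\<omega> i\<bar> then 1 else 0) = real (card {i\<in>{..<n}. t \<le> \<bar>\<omega> i\<bar>})"
    by (simp add: sum.If_cases Int_def)
  moreover have "real (nat \<lceil>\<rho> * real n\<rceil>) \<le> max 0 (\<rho> * real n + 1)" by linarith
  ultimately have "real (nat \<lceil>\<rho> * real n\<rceil>) \<le> real (card {i\<in>{..<n}. t \<le> \<bar>\<omega> i\<bar>})"
    using many n by (auto simp: field_simps)
  then have "S_rho p n \<rho> \<omega> \<le> (\<Sum>i<n. if t \<le> \<bar>\<omega> i\<bar> then \<bar>\<omega> i\<bar> powr p else 0)"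
    by (intro S_rho_le_truncated_sum p t) simp
  with light show ?thesis by simp
qed

text \<open>The same statement for probabilities: the bad event is covered by two deviation events.\<close>

lemma prob_S_rho_below:
  assumes p: "0 < p" and t: "0 < t" and n: "2 \<le> real n * (q - \<rho>)"
    and few: "measure (gauss_vec n) {\<omega> \<in> space (gauss_vec n).
                (\<Sum>i<n. if t \<le> \<bar>\<omega> i\<bar> then 1 else 0) \<le> real n * (q - (q - \<rho>) / 2)} \<le> e"
      (is "measure _ ?Few \<le> _")
    and heavy: "measure (gauss_vec n) {\<omega> \<in> space (gauss_vec n).
                K \<le> (\<Sum>i<n. if t \<le> \<bar>\<omega> i\<bar> then \<bar>\<omega> i\<bar> powr p else 0)} \<le> e"
      (is "measure _ ?Heavy \<le> _")
  shows "1 - 2 * e \<le> measure (gauss_vec n) {\<omega> \<in> space (gauss_vec n). S_rho p n \<rho> \<omega> \<le> K}"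
    (is "_ \<le> measure _ ?Good")
proof -
  have "\<omega> \<in> ?Few \<union> ?Heavy" if "\<omega> \<in> space (gauss_vec n) - ?Good" for \<omega>
    using that S_rho_below_on_typical_sample[OF p t n, of \<omega> K] by (auto; linarith)
  then have cover: "space (gauss_vec n) - ?Good \<subseteq> ?Few \<union> ?Heavy" by blast
  have "?Few \<in> sets (gauss_vec n)" "?Heavy \<in> sets (gauss_vec n)"
    by (intro borel_measurable_le gauss_vec_sum_measurable; simp)+
  then have "1 - measure (gauss_vec n) ?Few - measure (gauss_vec n) ?Heavy \<le> measure (gauss_vec n) ?Good"
    by (intro prob_space.prob_outside_two_events[OF prob_space_gauss_vec S_rho_event_measurable _ _ cover])
  with few heavy show ?thesis by linarith
qed

theorem corollary1:
  fixes p \<rho> :: real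
  assumes "0 < p" and "p \<le> 1" and "\<rho> < rhostar p"
  shows "\<exists>\<delta>>0. \<exists>c2>0. \<exists>N. \<forall>n\<ge>N.
           measure (gauss_vec n) {\<omega> \<in> space (gauss_vec n). S_rho p n \<rho> \<omega> \<le> (1/2 - \<delta>) * S_mean p n}
             \<ge> 1 - 2 * exp (- c2 * real n)"
proof -
  have p: "0 < p" "p \<le> 1" using assms by auto
  obtain t where t: "zstar p < t" and \<rho>: "\<rho> < 1 - erf (t / sqrt 2)"
    using threshold_above_zstar[OF p assms(3)] .
  have t0: "0 < t" using zstar_spec[OF p] t by linarith
  define q where "q = 1 - erf (t / sqrt 2)"
  define \<mu> where "\<mu> = integral {0..} (\<lambda>x. x powr p * half_normal x)"
  define a where "a = integral {t..} (\<lambda>x. x powr p * half_normal x)"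
  have \<mu>: "0 < \<mu>" and a: "a < \<mu> / 2"
    using moment_pos[OF p] moment_tail_below_half[OF p t] by (simp_all add: \<mu>_def a_def)
  obtain c1 where c1: "c1 > 0" "\<And>n. measure (gauss_vec n) {\<omega> \<in> space (gauss_vec n).
      (\<Sum>i<n. if t \<le> \<bar>\<omega> i\<bar> then 1 else 0) \<le> real n * (q - (q - \<rho>) / 2)} \<le> exp (- c1 * real n)"
    using count_above_concentration[of t "(q - \<rho>) / 2"] t0 \<rho> unfolding q_def by auto
  obtain c2 where c2: "c2 > 0" "\<And>n. measure (gauss_vec n) {\<omega> \<in> space (gauss_vec n).
      real n * (a + (\<mu> / 2 - a) / 2) \<le> (\<Sum>i<n. if t \<le> \<bar>\<omega> i\<bar> then \<bar>\<omega> i\<bar> powr p else 0)}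
      \<le> exp (- c2 * real n)"
    using truncated_sum_concentration[OF p, of t "(\<mu> / 2 - a) / 2"] t0 a unfolding a_def by auto
  define \<delta> where "\<delta> = (\<mu> / 2 - a) / (2 * \<mu>)"
  have \<delta>: "0 < \<delta>" "(1/2 - \<delta>) * S_mean p n = real n * (a + (\<mu> / 2 - a) / 2)" for n
    using a \<mu> S_mean_eq[OF p, of n] unfolding \<mu>_def[symmetric] by (auto simp: \<delta>_def field_simps)
  have "1 - 2 * exp (- min c1 c2 * real n)
      \<le> measure (gauss_vec n) {\<omega> \<in> space (gauss_vec n). S_rho p n \<rho> \<omega> \<le> (1/2 - \<delta>) * S_mean p n}"
    if "nat \<lceil>2 / (q - \<rho>)\<rceil> \<le> n" for n
  proof -
    have n: "2 \<le> real n * (q - \<rho>)" using that \<rho> by (simp add: q_def field_simps)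
    have "exp (- c * real n) \<le> exp (- min c1 c2 * real n)" if "c \<in> {c1, c2}" for c
      using that by (auto intro: mult_right_mono)
    then show ?thesis unfolding \<delta>(2)
      by (intro prob_S_rho_below[OF p(1) t0 n] order.trans[OF c1(2)] order.trans[OF c2(2)]) auto
  qed
  moreover have "0 < min c1 c2" using c1 c2 by simp
  ultimately show ?thesis using \<delta>(1)
    by (intro exI[of _ \<delta>] exI[of _ "min c1 c2"] exI[of _ "nat \<lceil>2 / (q - \<rho>)\<rceil>"]) blast
qed

end
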